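(* The element $(\mathcal{X}^2)^4\in\Lambda$ is a nonzero element of maximal rank, i.e. $(\mathcal{X}^2)^4=c\,\prod_{a,A}\psi^a_A\prod_{a,A}\overline{\psi^a_A}$ (product of all 24 generators in a fixed order) with $c\neq0$.
   Context: Colour indices $A,B,\dots\in\{1,2,3\}$; bispinor indices $a,b,\dots\in\{1,2,\dot1,\dot2\}$; summation over repeated indices; spacetime indices raised/lowered with $\eta=\mathrm{diag}(1,-1,-1,-1)$. $\Lambda$ is the complex Grassmann algebra generated by the 24 anticommuting generators $\psi^a_A,\overline{\psi^a_A}$. $g^{AB}=\delta^{AB}$. Spinor structures: $\sigma^\mu=(I,\sigma^1,\sigma^2,\sigma^3)$, $\tilde\sigma^\mu=(I,-\sigma^k)$; in the ordering $(1,2,\dot1,\dot2)$, $(\gamma^\mu)^a{}_b=\begin{pmatrix}0&\tilde\sigma^\mu\\ \sigma^\mu&0\end{pmatrix}$, $\epsilon_{ab}=\begin{pmatrix}\varepsilon&0\\0&-\varepsilon\end{pmatrix}$ with $\varepsilon=\begin{pmatrix}0&1\\-1&0\end{pmatrix}$, $(\gamma^\mu)_{cb}:=(\gamma^\mu)^a{}_b\epsilon_{ac}$, $\beta_{ab}=\begin{pmatrix}0&I_2\\ I_2&0\end{pmatrix}$, and $\beta_{abcd}:=\tfrac12\overline{(\gamma_\mu)_{ab}}(\gamma^\mu)_{cd}$. Define $\mathcal{J}^{ab}:=\overline{\psi^a_A}g^{AB}\psi^b_B$ and $\mathcal{X}^2:=4\beta_{bcef}\beta_{ad}\{\mathcal{J}^{ad}\mathcal{J}^{be}\mathcal{J}^{cf}+2\mathcal{J}^{ae}\mathcal{J}^{bf}\mathcal{J}^{cd}\}$.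 *)

theory Defs
  imports Complex_Main
begin

text \<open>Generators are indexed by natural numbers 0..23:
  psi^a_A   (a bispinor index 0..3 for 1,2,dot1,dot2; A colour index 0..2 for 1,2,3)  -> 3*a + A,
  bar psi^a_A -> 12 + 3*a + A.
  An element of the algebra is given by its coefficients on the monomials
  e_S = e_{i1} ... e_{ik} (i1 < ... < ik), S = {i1,...,ik}.\<close>

type_synonym grass = "nat set \<Rightarrow> complex"

definition gsign :: "nat set \<Rightarrow> nat set \<Rightarrow> complex" where
  "gsign A B = (-1) ^ card {(a, b). a \<in> A \<and> b \<in> B \<and> b < a}"

text \<open>Product: e_A e_B = gsign A B * e_(A \<union> B) for disjoint A, B, and 0 otherwise.\<close>
definition gmul :: "grass \<Rightarrow> grass \<Rightarrow> grass" where
  "gmul x y = (\<lambda>S. \<Sum>A\<in>Pow S. gsign A (S - A) * x A * y (S - A))"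

definition gadd :: "grass \<Rightarrow> grass \<Rightarrow> grass" where
  "gadd x y = (\<lambda>S. x S + y S)"

definition gsmul :: "complex \<Rightarrow> grass \<Rightarrow> grass" where
  "gsmul c x = (\<lambda>S. c * x S)"

definition gsum :: "('i \<Rightarrow> grass) \<Rightarrow> 'i set \<Rightarrow> grass" where
  "gsum f I = (\<lambda>S. \<Sum>i\<in>I. f i S)"

definition gone :: grass where
  "gone = (\<lambda>S. if S = {} then 1 else 0)"

definition gpow :: "grass \<Rightarrow> nat \<Rightarrow> grass" where
  "gpow x n = (gmul x ^^ n) gone"

definition gen :: "nat \<Rightarrow> grass" where
  "gen i = (\<lambda>S. if S = {i} then 1 else 0)"

definition psi :: "nat \<Rightarrow> nat \<Rightarrow> grass" where
  "psi a A = gen (3 * a + A)"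

definition psibar :: "nat \<Rightarrow> nat \<Rightarrow> grass" where
  "psibar a A = gen (12 + 3 * a + A)"

text \<open>Product of all 24 generators in the fixed order
  psi^1_1 psi^1_2 ... psi^{dot2}_3 bar psi^1_1 ... bar psi^{dot2}_3.\<close>
definition gtop :: grass where
  "gtop = foldl gmul gone (map gen [0..<24])"

definition sigma :: "nat \<Rightarrow> nat \<Rightarrow> nat \<Rightarrow> complex" where
  "sigma \<mu> i j =
     (if \<mu> = 0 then (if i = j then 1 else 0)
      else if \<mu> = 1 then (if i \<noteq> j then 1 else 0)
      else if \<mu> = 2 then (if i = 0 \<and> j = 1 then - \<i> else if i = 1 \<and> j = 0 then \<i> else 0)
      else (if i = 0 \<and> j = 0 then 1 else if i = 1 \<and> j = 1 then -1 else 0))"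

definition sigmat :: "nat \<Rightarrow> nat \<Rightarrow> nat \<Rightarrow> complex" where
  "sigmat \<mu> i j = (if \<mu> = 0 then sigma 0 i j else - sigma \<mu> i j)"

text \<open>(gamma^mu)^a_b, bispinor indices 0,1,2,3 = 1,2,dot1,dot2.\<close>
definition gamma_up :: "nat \<Rightarrow> nat \<Rightarrow> nat \<Rightarrow> complex" where
  "gamma_up \<mu> a b =
     (if a < 2 \<and> 2 \<le> b \<and> b < 4 then sigmat \<mu> a (b - 2)
      else if 2 \<le> a \<and> a < 4 \<and> b < 2 then sigma \<mu> (a - 2) b else 0)"

definition eps2 :: "nat \<Rightarrow> nat \<Rightarrow> complex" where
  "eps2 i j = (if i = 0 \<and> j = 1 then 1 else if i = 1 \<and> j = 0 then -1 else 0)"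

definition epsilon :: "nat \<Rightarrow> nat \<Rightarrow> complex" where
  "epsilon a b =
     (if a < 2 \<and> b < 2 then eps2 a b
      else if 2 \<le> a \<and> a < 4 \<and> 2 \<le> b \<and> b < 4 then - eps2 (a - 2) (b - 2) else 0)"

definition gamma_low :: "nat \<Rightarrow> nat \<Rightarrow> nat \<Rightarrow> complex" where
  "gamma_low \<mu> c b = (\<Sum>a<4. gamma_up \<mu> a b * epsilon a c)"

definition eta :: "nat \<Rightarrow> complex" where
  "eta \<mu> = (if \<mu> = 0 then 1 else -1)"

text \<open>beta_{abcd} = 1/2 conj((gamma_mu)_{ab}) (gamma^mu)_{cd}, with gamma_mu = eta_{mu mu} gamma^mu.\<close>
definition beta4 :: "nat \<Rightarrow> nat \<Rightarrow> nat \<Rightarrow> nat \<Rightarrow> complex" where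
  "beta4 a b c d = 1/2 * (\<Sum>\<mu><4. cnj (eta \<mu> * gamma_low \<mu> a b) * gamma_low \<mu> c d)"

definition beta2 :: "nat \<Rightarrow> nat \<Rightarrow> complex" where
  "beta2 a b = (if (a < 2 \<and> b = a + 2) \<or> (b < 2 \<and> a = b + 2) then 1 else 0)"

text \<open>J^{ab} = bar psi^a_A g^{AB} psi^b_B with g^{AB} = delta^{AB}.\<close>
definition Jc :: "nat \<Rightarrow> nat \<Rightarrow> grass" where
  "Jc a b = gsum (\<lambda>A. gmul (psibar a A) (psi b A)) {..<3}"

definition X2 :: grass where
  "X2 = gsmul 4 (gsum (\<lambda>(a, b, c, d, e, f).
          gsmul (beta4 b c e f * beta2 a d)
            (gadd (gmul (gmul (Jc a d) (Jc b e)) (Jc c f))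
                  (gsmul 2 (gmul (gmul (Jc a e) (Jc b f)) (Jc c d)))))
        ({..<4} \<times> {..<4} \<times> {..<4} \<times> {..<4} \<times> {..<4} \<times> {..<4}))"

end

theory Submission
  imports Defs
begin

text \<open>Every monomial of \<open>\<X>\<^sup>2\<close> contains exactly one of the four colour-1 generators
  \<open>\<psi>\<^sup>a\<^sub>1\<close>, so \<open>\<X>\<^sup>2 = Y\<^sub>1 + \<dots> + Y\<^sub>4\<close>, where \<open>Y\<^sub>a\<close> collects the monomials containing \<open>\<psi>\<^sup>a\<^sub>1\<close>.
  The \<open>Y\<^sub>a\<close> are even, hence commute, and square to zero, so \<open>(\<X>\<^sup>2)\<^sup>4 = 4! Y\<^sub>1 Y\<^sub>2 Y\<^sub>3 Y\<^sub>4\<close>.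
  The support property of \<open>\<X>\<^sup>2\<close> and the value of this product, a nonzero multiple of the
  top monomial, are obtained by a verified computation on a binary-tree representation of \<open>\<Lambda>\<close>.\<close>

section \<open>The Grassmann algebra\<close>

definition gzero :: grass where
  "gzero = (\<lambda>S. 0)"

definition gmono :: "nat set \<Rightarrow> grass" where
  "gmono A = (\<lambda>S. if S = A then 1 else 0)"

definition gparity :: "grass \<Rightarrow> grass" where
  "gparity x = (\<lambda>S. (-1) ^ card S * x S)"

definition gcontaining :: "nat \<Rightarrow> grass \<Rightarrow> grass" where
  "gcontaining i x = (\<lambda>S. if i \<in> S then x S else 0)"

definition gfinite :: "grass \<Rightarrow> bool" where
  "gfinite x \<longleftrightarrow> (\<forall>S. x S \<noteq> 0 \<longrightarrow> finite S)"

definition geven :: "grass \<Rightarrow> bool" where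
  "geven x \<longleftrightarrow> (\<forall>S. x S \<noteq> 0 \<longrightarrow> finite S \<and> even (card S))"

definition inversions :: "nat set \<Rightarrow> nat set \<Rightarrow> (nat \<times> nat) set" where
  "inversions A B = {(a, b). a \<in> A \<and> b \<in> B \<and> b < a}"

lemma gsign_eq: "gsign A B = (-1) ^ card (inversions A B)"
  by (simp add: gsign_def inversions_def)

lemma finite_inversions: "finite A \<Longrightarrow> finite B \<Longrightarrow> finite (inversions A B)"
  by (rule finite_subset[of _ "A \<times> B"]) (auto simp: inversions_def)

lemma gsign_square: "gsign A B * gsign A B = 1"
  by (simp add: gsign_eq power_mult_distrib[symmetric])

lemma gsign_empty_left [simp]: "gsign {} B = 1"
  and gsign_empty_right [simp]: "gsign A {} = 1"
  by (simp_all add: gsign_eq inversions_def)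

lemma gsign_Un_left:
  assumes "finite A" "finite B" "finite C" "A \<inter> B = {}"
  shows "gsign (A \<union> B) C = gsign A C * gsign B C"
proof -
  have "inversions (A \<union> B) C = inversions A C \<union> inversions B C"
    and "inversions A C \<inter> inversions B C = {}"
    using assms(4) by (auto simp: inversions_def)
  then show ?thesis
    using finite_inversions[OF assms(1,3)] finite_inversions[OF assms(2,3)]
    by (simp add: gsign_eq card_Un_disjoint power_add)
qed

lemma gsign_Un_right:
  assumes "finite A" "finite B" "finite C" "B \<inter> C = {}"
  shows "gsign A (B \<union> C) = gsign A B * gsign A C"
proof -
  have "inversions A (B \<union> C) = inversions A B \<union> inversions A C"
    and "inversions A B \<inter> inversions A C = {}"
    using assms(4) by (auto simp: inversions_def)
  then show ?thesis
    using finite_inversions[OF assms(1,2)] finite_inversions[OF assms(1,3)]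
    by (simp add: gsign_eq card_Un_disjoint power_add)
qed

lemma card_inversions_swap:
  assumes "finite A" "finite B" "A \<inter> B = {}"
  shows "card (inversions A B) + card (inversions B A) = card A * card B"
proof -
  let ?swap = "\<lambda>(a::nat, b::nat). (b, a)"
  have "A \<times> B = inversions A B \<union> ?swap ` inversions B A"
    using assms(3) by (auto simp: inversions_def image_iff)
  moreover have "inversions A B \<inter> ?swap ` inversions B A = {}"
    by (auto simp: inversions_def)
  moreover have "card (?swap ` inversions B A) = card (inversions B A)"
    by (rule card_image) (auto simp: inj_on_def)
  ultimately have "card (A \<times> B) = card (inversions A B) + card (inversions B A)"
    using finite_inversions[OF assms(1,2)] finite_inversions[OF assms(2,1)]
    by (simp add: card_Un_disjoint)
  then show ?thesis
    by (simp add: card_cartesian_product)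
qed

lemma gsign_swap:
  assumes "finite A" "finite B" "A \<inter> B = {}"
  shows "gsign A B * gsign B A = (-1) ^ (card A * card B)"
  using card_inversions_swap[OF assms] by (simp add: gsign_eq power_add[symmetric])

lemma gsign_swap_even:
  assumes "finite A" "finite B" "A \<inter> B = {}" "even (card A)"
  shows "gsign A B = gsign B A"
proof -
  have "gsign A B = gsign A B * (gsign B A * gsign B A)"
    by (simp add: gsign_square)
  also have "\<dots> = gsign B A"
    using gsign_swap[OF assms(1-3)] assms(4) by (simp add: mult.assoc[symmetric])
  finally show ?thesis .
qed

lemma gone_eq_gmono: "gone = gmono {}"
  by (simp add: gone_def gmono_def)

lemma gen_eq_gmono: "gen i = gmono {i}"
  by (simp add: gen_def gmono_def)

lemma gmul_apply: "gmul x y S = (\<Sum>A\<in>Pow S. gsign A (S - A) * x A * y (S - A))"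
  by (simp add: gmul_def)

lemma gmul_infinite: "infinite S \<Longrightarrow> gmul x y S = 0"
  by (simp add: gmul_def)

lemma gmul_nonzero_split:
  assumes "gmul x y S \<noteq> 0"
  obtains A where "finite S" "A \<subseteq> S" "x A \<noteq> 0" "y (S - A) \<noteq> 0"
proof -
  from assms obtain A where "A \<in> Pow S" "gsign A (S - A) * x A * y (S - A) \<noteq> 0"
    unfolding gmul_apply by (meson sum.not_neutral_contains_not_neutral)
  with that show thesis
    using assms gmul_infinite by fastforce
qed

lemma gmul_gmono_left:
  "gmul (gmono A) y S = (if A \<subseteq> S \<and> finite S then gsign A (S - A) * y (S - A) else 0)"
proof (cases "finite S")
  case True
  have "gmul (gmono A) y S = (\<Sum>B\<in>Pow S. if B = A then gsign A (S - A) * y (S - A) else 0)"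
    unfolding gmul_apply by (rule sum.cong) (auto simp: gmono_def)
  with True show ?thesis
    by (simp add: sum.delta)
qed (simp add: gmul_infinite)

lemma gmul_gmono_right:
  "gmul x (gmono B) S = (if B \<subseteq> S \<and> finite S then gsign (S - B) B * x (S - B) else 0)"
proof (cases "finite S")
  case True
  have "gmul x (gmono B) S = (\<Sum>A\<in>Pow S. if A = S - B \<and> B \<subseteq> S then gsign (S - B) B * x (S - B) else 0)"
    unfolding gmul_apply
  proof (rule sum.cong)
    fix A assume "A \<in> Pow S"
    then have "S - A = B \<longleftrightarrow> A = S - B \<and> B \<subseteq> S"
      by auto
    then show "gsign A (S - A) * x A * gmono B (S - A) =
        (if A = S - B \<and> B \<subseteq> S then gsign (S - B) B * x (S - B) else 0)"
      by (auto simp: gmono_def)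
  qed simp
  with True show ?thesis
    by (cases "B \<subseteq> S") (simp_all add: sum.delta)
qed (simp add: gmul_infinite)

lemma gmul_gmono_gmono:
  assumes "finite A" "finite B"
  shows "gmul (gmono A) (gmono B) =
    (if A \<inter> B = {} then gsmul (gsign A B) (gmono (A \<union> B)) else gzero)"
proof
  fix S
  have "A \<subseteq> S \<and> S - A = B \<longleftrightarrow> A \<inter> B = {} \<and> S = A \<union> B"
    by auto
  then show "gmul (gmono A) (gmono B) S =
      (if A \<inter> B = {} then gsmul (gsign A B) (gmono (A \<union> B)) else gzero) S"
    unfolding gmul_gmono_left using assms by (auto simp: gmono_def gsmul_def gzero_def)
qed

lemma gmul_gen_apply:
  "gmul (gen i) y S = (if i \<in> S \<and> finite S then gsign {i} (S - {i}) * y (S - {i}) else 0)"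
  by (simp add: gen_eq_gmono gmul_gmono_left)

lemma gadd_assoc: "gadd (gadd x y) z = gadd x (gadd y z)"
  and gadd_commute: "gadd x y = gadd y x"
  and gadd_left_commute: "gadd x (gadd y z) = gadd y (gadd x z)"
  and gadd_gzero_left [simp]: "gadd gzero x = x"
  and gadd_gzero_right [simp]: "gadd x gzero = x"
  by (simp_all add: gadd_def gzero_def fun_eq_iff algebra_simps)

lemma gsmul_gsmul [simp]: "gsmul c (gsmul d x) = gsmul (c * d) x"
  and gsmul_one [simp]: "gsmul 1 x = x"
  and gsmul_zero [simp]: "gsmul 0 x = gzero"
  and gsmul_gzero [simp]: "gsmul c gzero = gzero"
  and gsmul_gadd: "gsmul c (gadd x y) = gadd (gsmul c x) (gsmul c y)"
  and gsmul_add: "gsmul (c + d) x = gadd (gsmul c x) (gsmul d x)"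
  by (simp_all add: gsmul_def gadd_def gzero_def fun_eq_iff algebra_simps)

lemma gmul_gadd_left: "gmul (gadd x y) z = gadd (gmul x z) (gmul y z)"
  and gmul_gadd_right: "gmul x (gadd y z) = gadd (gmul x y) (gmul x z)"
  and gmul_gsmul_left [simp]: "gmul (gsmul c x) y = gsmul c (gmul x y)"
  and gmul_gsmul_right [simp]: "gmul x (gsmul c y) = gsmul c (gmul x y)"
  and gmul_gzero_left [simp]: "gmul gzero y = gzero"
  and gmul_gzero_right [simp]: "gmul x gzero = gzero"
  by (simp_all add: gmul_def gadd_def gsmul_def gzero_def fun_eq_iff algebra_simps
      sum.distrib sum_distrib_left)

lemma gmul_gmul_left_expansion:
  assumes "finite S"
  shows "gmul (gmul x y) z S = (\<Sum>B\<in>Pow S. \<Sum>C\<in>Pow (S - B).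
    gsign B C * gsign (B \<union> C) (S - B - C) * x B * y C * z (S - B - C))"
proof -
  have "gmul (gmul x y) z S = (\<Sum>A\<in>Pow S. \<Sum>B\<in>{B\<in>Pow S. B \<subseteq> A}.
      gsign A (S - A) * gsign B (A - B) * x B * y (A - B) * z (S - A))"
    unfolding gmul_apply sum_distrib_left sum_distrib_right
    by (intro sum.cong refl arg_cong2[where f = sum]) (auto simp: ac_simps)
  also have "\<dots> = (\<Sum>B\<in>Pow S. \<Sum>A\<in>{A\<in>Pow S. B \<subseteq> A}.
      gsign A (S - A) * gsign B (A - B) * x B * y (A - B) * z (S - A))"
    using assms by (intro sum.swap_restrict) auto
  also have "\<dots> = (\<Sum>B\<in>Pow S. \<Sum>C\<in>Pow (S - B).
      gsign B C * gsign (B \<union> C) (S - B - C) * x B * y C * z (S - B - C))"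
  proof (rule sum.cong[OF refl])
    fix B assume B: "B \<in> Pow S"
    show "(\<Sum>A\<in>{A\<in>Pow S. B \<subseteq> A}.
          gsign A (S - A) * gsign B (A - B) * x B * y (A - B) * z (S - A)) =
        (\<Sum>C\<in>Pow (S - B). gsign B C * gsign (B \<union> C) (S - B - C) * x B * y C * z (S - B - C))"
    proof (rule sym, intro sum.reindex_bij_witness[of _ "\<lambda>A. A - B" "\<lambda>C. B \<union> C"])
      fix C assume "C \<in> Pow (S - B)"
      then have "B \<union> C - B = C" "S - (B \<union> C) = S - B - C"
        by auto
      then show "gsign (B \<union> C) (S - (B \<union> C)) * gsign B (B \<union> C - B) * x B * y (B \<union> C - B)
          * z (S - (B \<union> C)) = gsign B C * gsign (B \<union> C) (S - B - C) * x B * y C * z (S - B - C)"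
        by (simp add: ac_simps)
    qed (use B in auto)
  qed
  finally show ?thesis .
qed

lemma gmul_gmul_right_expansion:
  assumes "finite S"
  shows "gmul x (gmul y z) S = (\<Sum>B\<in>Pow S. \<Sum>C\<in>Pow (S - B).
    gsign B C * gsign (B \<union> C) (S - B - C) * x B * y C * z (S - B - C))"
  unfolding gmul_apply sum_distrib_left
proof (intro sum.cong refl)
  fix B C assume B: "B \<in> Pow S" and C: "C \<in> Pow (S - B)"
  define D where "D = S - B - C"
  have fin: "finite B" "finite C" "finite D"
    using B C assms by (auto simp: D_def intro: finite_subset)
  have "S - B = C \<union> D" "B \<inter> C = {}" "C \<inter> D = {}"
    using C by (auto simp: D_def)
  then have "gsign B (S - B) * gsign C D = gsign B C * gsign (B \<union> C) D"
    using fin by (simp add: gsign_Un_left gsign_Un_right ac_simps)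
  then show "gsign B (S - B) * x B * (gsign C (S - B - C) * y C * z (S - B - C)) =
      gsign B C * gsign (B \<union> C) (S - B - C) * x B * y C * z (S - B - C)"
    unfolding D_def[symmetric] by (metis (no_types, lifting) mult.assoc mult.left_commute)
qed

lemma gmul_assoc: "gmul (gmul x y) z = gmul x (gmul y z)"
proof
  fix S
  show "gmul (gmul x y) z S = gmul x (gmul y z) S"
    by (cases "finite S")
      (simp_all add: gmul_gmul_left_expansion gmul_gmul_right_expansion gmul_infinite)
qed

lemma gfinite_gmul [simp]: "gfinite (gmul x y)"
  unfolding gfinite_def using gmul_infinite by blast

lemma gfinite_gen [simp]: "gfinite (gen i)"
  and gfinite_gone [simp]: "gfinite gone"
  and gfinite_gsmul [simp]: "gfinite x \<Longrightarrow> gfinite (gsmul c x)"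
  and gfinite_gadd [simp]: "gfinite x \<Longrightarrow> gfinite y \<Longrightarrow> gfinite (gadd x y)"
  unfolding gfinite_def gen_def gone_def gsmul_def gadd_def
  by (auto, metis add.left_neutral add.right_neutral)

lemma gmul_gone_left [simp]: "gfinite x \<Longrightarrow> gmul gone x = x"
  and gmul_gone_right [simp]: "gfinite x \<Longrightarrow> gmul x gone = x"
  by (auto simp: fun_eq_iff gone_eq_gmono gmul_gmono_left gmul_gmono_right gfinite_def)

lemma gparity_gmul: "gparity (gmul x y) = gmul (gparity x) (gparity y)"
proof
  fix S
  show "gparity (gmul x y) S = gmul (gparity x) (gparity y) S"
  proof (cases "finite S")
    case True
    have "card S = card A + card (S - A)" if "A \<subseteq> S" for A
      using True that by (metis card_Diff_subset card_mono finite_subset le_add_diff_inverse)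
    then show ?thesis
      by (auto simp: gparity_def gmul_apply sum_distrib_left power_add ac_simps intro!: sum.cong)
  qed (simp add: gparity_def gmul_infinite)
qed

lemma gparity_gadd [simp]: "gparity (gadd x y) = gadd (gparity x) (gparity y)"
  and gparity_gsmul [simp]: "gparity (gsmul c x) = gsmul c (gparity x)"
  and gparity_gzero [simp]: "gparity gzero = gzero"
  and gparity_gone [simp]: "gparity gone = gone"
  and gparity_gen [simp]: "gparity (gen i) = gsmul (-1) (gen i)"
  by (simp_all add: gparity_def gadd_def gsmul_def gzero_def gone_def gen_def fun_eq_iff
      algebra_simps)

lemma gmul_gen_commute: "gmul x (gen i) = gmul (gen i) (gparity x)"
proof
  fix S
  show "gmul x (gen i) S = gmul (gen i) (gparity x) S"
  proof (cases "i \<in> S \<and> finite S")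
    case True
    define B where "B = S - {i}"
    have "finite B" "B \<inter> {i} = {}"
      using True by (simp_all add: B_def)
    then have "gsign B {i} = gsign B {i} * (gsign {i} B * gsign {i} B)"
      and "gsign B {i} * gsign {i} B = (-1) ^ card B"
      using gsign_swap[of B "{i}"] by (simp_all add: gsign_square)
    then have "gsign B {i} = (-1) ^ card B * gsign {i} B"
      by (metis mult.assoc)
    with True show ?thesis
      by (simp add: gen_eq_gmono gmul_gmono_left gmul_gmono_right gparity_def B_def[symmetric])
  qed (auto simp: gen_eq_gmono gmul_gmono_left gmul_gmono_right)
qed

lemma gmul_eq_gzero_if_common_generator:
  assumes "\<And>S. x S \<noteq> 0 \<Longrightarrow> i \<in> S" "\<And>S. y S \<noteq> 0 \<Longrightarrow> i \<in> S"
  shows "gmul x y = gzero"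
proof (rule ccontr)
  assume "gmul x y \<noteq> gzero"
  then obtain S where "gmul x y S \<noteq> 0"
    by (auto simp: gzero_def)
  then obtain A where "x A \<noteq> 0" "y (S - A) \<noteq> 0"
    by (rule gmul_nonzero_split)
  then show False
    using assms by blast
qed

lemma gmul_commute_geven:
  assumes "geven x" "geven y"
  shows "gmul x y = gmul y x"
proof
  fix S
  show "gmul x y S = gmul y x S"
  proof (cases "finite S")
    case True
    have "gmul y x S = (\<Sum>A\<in>Pow S. gsign (S - A) A * y (S - A) * x A)"
      unfolding gmul_apply
      by (rule sum.reindex_bij_witness[of _ "\<lambda>A. S - A" "\<lambda>A. S - A"])
        (auto simp: Diff_Diff_Int Int_absorb1)
    also have "\<dots> = gmul x y S"
      unfolding gmul_apply
    proof (rule sum.cong[OF refl])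
      fix A assume A: "A \<in> Pow S"
      show "gsign (S - A) A * y (S - A) * x A = gsign A (S - A) * x A * y (S - A)"
      proof (cases "x A = 0")
        case False
        then have "gsign A (S - A) = gsign (S - A) A"
          using assms(1) True by (intro gsign_swap_even) (auto simp: geven_def)
        then show ?thesis
          by simp
      qed simp
    qed
    finally show ?thesis ..
  qed (simp add: gmul_infinite)
qed

lemma geven_gfinite: "geven x \<Longrightarrow> gfinite x"
  by (simp add: geven_def gfinite_def)

lemma geven_gzero [simp]: "geven gzero"
  and geven_gone [simp]: "geven gone"
  by (simp_all add: geven_def gzero_def gone_def)

lemma geven_gadd: "geven x \<Longrightarrow> geven y \<Longrightarrow> geven (gadd x y)"
  unfolding geven_def gadd_def by (metis add.left_neutral add.right_neutral)

lemma geven_gsmul: "geven x \<Longrightarrow> geven (gsmul c x)"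
  by (auto simp: geven_def gsmul_def)

lemma geven_gsum: "(\<And>i. i \<in> I \<Longrightarrow> geven (f i)) \<Longrightarrow> geven (gsum f I)"
  unfolding geven_def gsum_def by (metis (no_types, lifting) sum.neutral)

lemma geven_gcontaining: "geven x \<Longrightarrow> geven (gcontaining i x)"
  by (simp add: geven_def gcontaining_def)

lemma geven_gmul:
  assumes "geven x" "geven y"
  shows "geven (gmul x y)"
  unfolding geven_def
proof (intro allI impI)
  fix S assume "gmul x y S \<noteq> 0"
  then obtain A where A: "finite S" "A \<subseteq> S" "x A \<noteq> 0" "y (S - A) \<noteq> 0"
    by (rule gmul_nonzero_split)
  then have "card S = card A + card (S - A)"
    by (metis card_Diff_subset card_mono finite_subset le_add_diff_inverse)
  with A assms show "finite S \<and> even (card S)"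
    by (simp add: geven_def)
qed

lemma geven_gmul_gen_gen: "geven (gmul (gen i) (gen j))"
proof -
  have "gmul (gen i) (gen j) = (if i = j then gzero else gsmul (gsign {i} {j}) (gmono {i, j}))"
    by (simp add: gen_eq_gmono gmul_gmono_gmono insert_commute)
  then show ?thesis
    by (auto simp: geven_def gmono_def gsmul_def gzero_def)
qed

lemma gcontaining_gadd [simp]:
  "gcontaining i (gadd x y) = gadd (gcontaining i x) (gcontaining i y)"
  by (simp add: gcontaining_def gadd_def fun_eq_iff)

lemma gcontaining_gmul_gen:
  "gcontaining i (gmul (gen k) y) =
    (if k = i then gmul (gen k) y else gmul (gen k) (gcontaining i y))"
  by (auto simp: fun_eq_iff gcontaining_def gmul_gen_apply)

lemma gsum_gcontaining:
  assumes "finite I" "\<And>S. x S \<noteq> 0 \<Longrightarrow> card (S \<inter> I) = 1"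
  shows "gsum (\<lambda>i. gcontaining i x) I = x"
proof
  fix S
  have "gsum (\<lambda>i. gcontaining i x) I S = of_nat (card (S \<inter> I)) * x S"
    using assms(1) by (simp add: gsum_def gcontaining_def sum.If_cases Int_commute)
  then show "gsum (\<lambda>i. gcontaining i x) I S = x S"
    using assms(2) by (cases "x S = 0") simp_all
qed

lemma power_Suc_add_square_zero:
  fixes s a :: "'a::comm_ring_1"
  assumes "a * a = 0"
  shows "(s + a) ^ Suc m = s ^ Suc m + of_nat (Suc m) * s ^ m * a"
proof (induction m)
  case (Suc m)
  have "(s + a) ^ Suc (Suc m) = (s + a) * (s ^ Suc m + of_nat (Suc m) * s ^ m * a)"
    using Suc.IH by (simp only: power_Suc)
  also have "\<dots> = s ^ Suc (Suc m) + of_nat (Suc (Suc m)) * s ^ Suc m * a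
      + of_nat (Suc m) * s ^ m * (a * a)"
    by (simp add: algebra_simps)
  also have "\<dots> = s ^ Suc (Suc m) + of_nat (Suc (Suc m)) * s ^ Suc m * a"
    using assms by simp
  finally show ?case .
qed simp

lemma power_sum_square_zero:
  fixes a :: "'i \<Rightarrow> 'a::comm_ring_1"
  assumes "finite I" "\<And>i. i \<in> I \<Longrightarrow> a i * a i = 0" "card I \<le> m"
  shows "(\<Sum>i\<in>I. a i) ^ m = (if m = card I then of_nat (fact (card I)) * (\<Prod>i\<in>I. a i) else 0)"
  using assms
proof (induction I arbitrary: m rule: finite_induct)
  case (insert i I)
  let ?s = "\<Sum>j\<in>I. a j"
  have card: "card (insert i I) = Suc (card I)"
    using insert.hyps by simp
  then obtain k where m: "m = Suc k" and k: "card I \<le> k"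
    using insert.prems(2) by (cases m) auto
  have IH: "?s ^ n = (if n = card I then of_nat (fact (card I)) * (\<Prod>j\<in>I. a j) else 0)"
    if "card I \<le> n" for n
    using insert.IH insert.prems(1) that by blast
  have "(\<Sum>j\<in>insert i I. a j) ^ m = (?s + a i) ^ Suc k"
    using insert.hyps by (simp add: m add.commute)
  also have "\<dots> = ?s ^ Suc k + of_nat (Suc k) * ?s ^ k * a i"
    using insert.prems(1) by (intro power_Suc_add_square_zero) simp
  also have "\<dots> = (if k = card I then of_nat (Suc k) * (of_nat (fact (card I)) * (\<Prod>j\<in>I. a j)) * a i else 0)"
    using IH[of "Suc k"] IH[of k] k by simp
  also have "\<dots> = (if m = card (insert i I) then of_nat (fact (card (insert i I))) * (\<Prod>j\<in>insert i I. a j) else 0)"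
    using insert.hyps by (simp add: m card algebra_simps)
  finally show ?case .
qed (simp add: power_0_left)

section \<open>The even subalgebra\<close>

typedef even_grass = "{x. geven x}"
  morphisms grass_of even_of
  using geven_gzero by blast

lemma geven_grass_of: "geven (grass_of x)"
  using grass_of by simp

lemma grass_of_even_of: "geven x \<Longrightarrow> grass_of (even_of x) = x"
  by (simp add: even_of_inverse)

lemma grass_of_eqI: "grass_of x = grass_of y \<Longrightarrow> x = y"
  by (simp add: grass_of_inject)

instantiation even_grass :: comm_ring_1
begin

definition "0 = even_of gzero"
definition "1 = even_of gone"
definition "x + y = even_of (gadd (grass_of x) (grass_of y))"
definition "- x = even_of (gsmul (-1) (grass_of x))"
definition "x - y = even_of (gadd (grass_of x) (gsmul (-1) (grass_of y)))"
definition "x * y = even_of (gmul (grass_of x) (grass_of y))"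

lemma grass_of_zero [simp]: "grass_of 0 = gzero"
  and grass_of_one [simp]: "grass_of 1 = gone"
  and grass_of_plus [simp]: "grass_of (x + y) = gadd (grass_of x) (grass_of y)"
  and grass_of_uminus [simp]: "grass_of (- x) = gsmul (-1) (grass_of x)"
  and grass_of_minus [simp]: "grass_of (x - y) = gadd (grass_of x) (gsmul (-1) (grass_of y))"
  and grass_of_times [simp]: "grass_of (x * y) = gmul (grass_of x) (grass_of y)"
  by (simp_all add: zero_even_grass_def one_even_grass_def plus_even_grass_def
      uminus_even_grass_def minus_even_grass_def times_even_grass_def grass_of_even_of
      geven_gadd geven_gsmul geven_gmul geven_grass_of)

instance
proof
  fix a b c :: even_grass
  show "a * b * c = a * (b * c)"
    by (rule grass_of_eqI) (simp add: gmul_assoc)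
  show "a * b = b * a"
    by (rule grass_of_eqI)
      (simp only: grass_of_times gmul_commute_geven[OF geven_grass_of geven_grass_of])
  show "1 * a = a"
    by (rule grass_of_eqI) (simp add: geven_gfinite geven_grass_of)
  show "a + b + c = a + (b + c)"
    by (rule grass_of_eqI) (simp add: gadd_assoc)
  show "a + b = b + a"
    by (rule grass_of_eqI) (simp add: gadd_commute)
  show "0 + a = a"
    by (rule grass_of_eqI) simp
  show "- a + a = 0"
    by (rule grass_of_eqI) (simp add: gadd_def gsmul_def gzero_def fun_eq_iff)
  show "a - b = a + - b"
    by (rule grass_of_eqI) simp
  show "(a + b) * c = a * c + b * c"
    by (rule grass_of_eqI) (simp add: gmul_gadd_left)
  have "gzero {} \<noteq> gone {}"
    by (simp add: gzero_def gone_def)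
  then show "(0::even_grass) \<noteq> 1"
    by (metis grass_of_one grass_of_zero)
qed

end

lemma grass_of_power: "grass_of (x ^ n) = gpow (grass_of x) n"
  by (induction n) (simp_all add: gpow_def)

lemma grass_of_of_nat: "grass_of (of_nat n) = gsmul (of_nat n) gone"
  by (induction n) (simp_all add: gsmul_add gadd_commute)

lemma grass_of_sum: "finite I \<Longrightarrow> grass_of (\<Sum>i\<in>I. f i) = gsum (\<lambda>i. grass_of (f i)) I"
  by (induction I rule: finite_induct) (simp_all add: gsum_def gzero_def gadd_def)

lemma gpow_card_eq_fact_prod_gcontaining:
  assumes "finite I" "geven x" "\<And>S. x S \<noteq> 0 \<Longrightarrow> card (S \<inter> I) = 1"
  shows "gpow x (card I) =
    gsmul (fact (card I)) (grass_of (\<Prod>i\<in>I. even_of (gcontaining i x)))"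
proof -
  define y where "y i = even_of (gcontaining i x)" for i
  have grass_of_y: "grass_of (y i) = gcontaining i x" for i
    by (simp add: y_def grass_of_even_of geven_gcontaining assms(2))
  have "y i * y i = 0" for i
    by (rule grass_of_eqI)
      (auto simp: grass_of_y gcontaining_def intro!: gmul_eq_gzero_if_common_generator
        split: if_splits)
  then have power: "(\<Sum>i\<in>I. y i) ^ card I = of_nat (fact (card I)) * (\<Prod>i\<in>I. y i)"
    using power_sum_square_zero[of I y] assms(1) by simp
  have sum_y: "grass_of (\<Sum>i\<in>I. y i) = x"
    using assms by (simp add: grass_of_sum grass_of_y gsum_gcontaining)
  have "gpow x (card I) = grass_of ((\<Sum>i\<in>I. y i) ^ card I)"
    unfolding grass_of_power sum_y ..
  also have "\<dots> = gmul (gsmul (fact (card I)) gone) (grass_of (\<Prod>i\<in>I. y i))"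
    unfolding power by (simp add: grass_of_of_nat)
  also have "\<dots> = gsmul (fact (card I)) (grass_of (\<Prod>i\<in>I. y i))"
    by (simp add: geven_gfinite geven_grass_of)
  finally show ?thesis
    by (simp add: y_def)
qed

section \<open>Computing in \<open>\<Lambda>\<close> with binary trees\<close>

datatype gtree = Zero | Leaf int | Node gtree gtree

text \<open>A tree at level \<open>k\<close> encodes an element in the generators \<open>e\<^sub>k, e\<^sub>k\<^sub>+\<^sub>1, \<dots>\<close>;
  \<open>Node l r\<close> stands for \<open>l + e\<^sub>k r\<close> with \<open>l\<close>, \<open>r\<close> at level \<open>k + 1\<close>.\<close>
fun gval :: "nat \<Rightarrow> gtree \<Rightarrow> grass" where
  "gval k Zero = gzero"
| "gval k (Leaf c) = gsmul (of_int c) gone"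
| "gval k (Node l r) = gadd (gval (Suc k) l) (gmul (gen k) (gval (Suc k) r))"

fun tscale :: "int \<Rightarrow> gtree \<Rightarrow> gtree" where
  "tscale c Zero = Zero"
| "tscale c (Leaf a) = Leaf (c * a)"
| "tscale c (Node l r) = Node (tscale c l) (tscale c r)"

fun tparity :: "gtree \<Rightarrow> gtree" where
  "tparity Zero = Zero"
| "tparity (Leaf a) = Leaf a"
| "tparity (Node l r) = Node (tparity l) (tscale (-1) (tparity r))"

fun tadd :: "gtree \<Rightarrow> gtree \<Rightarrow> gtree" where
  "tadd Zero v = v"
| "tadd u Zero = u"
| "tadd (Leaf a) (Leaf b) = Leaf (a + b)"
| "tadd (Leaf a) (Node l r) = Node (tadd (Leaf a) l) r"
| "tadd (Node l r) (Leaf b) = Node (tadd l (Leaf b)) r"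
| "tadd (Node l r) (Node l' r') = Node (tadd l l') (tadd r r')"

text \<open>\<open>(l + e\<^sub>k r) (l' + e\<^sub>k r') = l l' + e\<^sub>k (l\<^sup>\<star> r' + r l')\<close>, where \<open>l\<^sup>\<star>\<close> is the parity image of \<open>l\<close>:
  \<open>e\<^sub>k\<close> anticommutes with the odd part of \<open>l\<close> and squares to zero.\<close>
fun tmul :: "gtree \<Rightarrow> gtree \<Rightarrow> gtree" where
  "tmul Zero v = Zero"
| "tmul u Zero = Zero"
| "tmul (Leaf a) v = tscale a v"
| "tmul u (Leaf b) = tscale b u"
| "tmul (Node l r) (Node l' r') = Node (tmul l l') (tadd (tmul (tparity l) r') (tmul r l'))"

definition tsum :: "gtree list \<Rightarrow> gtree" where
  "tsum ts = foldr tadd ts Zero"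

fun tnode :: "gtree \<Rightarrow> gtree \<Rightarrow> gtree" where
  "tnode Zero Zero = Zero"
| "tnode l r = Node l r"

fun tprune :: "gtree \<Rightarrow> gtree" where
  "tprune Zero = Zero"
| "tprune (Leaf a) = (if a = 0 then Zero else Leaf a)"
| "tprune (Node l r) = tnode (tprune l) (tprune r)"

fun tgen :: "nat \<Rightarrow> gtree" where
  "tgen 0 = Node Zero (Leaf 1)"
| "tgen (Suc i) = Node (tgen i) Zero"

lemma tgen_numeral [simp]: "tgen (numeral n) = Node (tgen (pred_numeral n)) Zero"
  by (simp add: numeral_eq_Suc)

fun tcontaining :: "nat \<Rightarrow> nat \<Rightarrow> gtree \<Rightarrow> gtree" where
  "tcontaining i k Zero = Zero"
| "tcontaining i k (Leaf c) = Zero"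
| "tcontaining i k (Node l r) =
    (if k = i then Node Zero r else Node (tcontaining i (Suc k) l) (tcontaining i (Suc k) r))"

fun ttop :: "int \<Rightarrow> nat \<Rightarrow> gtree" where
  "ttop c 0 = Leaf c"
| "ttop c (Suc n) = Node Zero (ttop c n)"

fun tmeets :: "nat set \<Rightarrow> nat \<Rightarrow> nat \<Rightarrow> gtree \<Rightarrow> bool" where
  "tmeets I n k Zero = True"
| "tmeets I n k (Leaf c) = (c = 0 \<or> n = 0)"
| "tmeets I n k (Node l r) = (tmeets I n (Suc k) l \<and>
    (if k \<in> I then (case n of 0 \<Rightarrow> r = Zero | Suc m \<Rightarrow> tmeets I m (Suc k) r)
     else tmeets I n (Suc k) r))"

lemma gval_support:
  assumes "gval k t S \<noteq> 0"
  shows "finite S \<and> S \<subseteq> {k..}"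
  using assms
proof (induction t arbitrary: k S)
  case (Node l r)
  show ?case
  proof (cases "gval (Suc k) l S = 0")
    case True
    with Node.prems have "k \<in> S" "finite S" "gval (Suc k) r (S - {k}) \<noteq> 0"
      by (auto simp: gadd_def gmul_gen_apply split: if_splits)
    with Node.IH(2)[of "Suc k" "S - {k}"] show ?thesis
      by auto
  next
    case False
    with Node.IH(1)[of "Suc k" S] show ?thesis
      by auto
  qed
qed (auto simp: gzero_def gsmul_def gone_def split: if_splits)

lemma gfinite_gval [simp]: "gfinite (gval k t)"
  using gval_support by (auto simp: gfinite_def)

lemma gval_tscale [simp]: "gval k (tscale c t) = gsmul (of_int c) (gval k t)"
  by (induction t arbitrary: k) (simp_all add: gsmul_gadd)

lemma gval_tparity [simp]: "gval k (tparity t) = gparity (gval k t)"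
  by (induction t arbitrary: k) (simp_all add: gparity_gmul)

lemma gval_tadd [simp]: "gval k (tadd u v) = gadd (gval k u) (gval k v)"
  by (induction u v arbitrary: k rule: tadd.induct)
    (simp_all add: gsmul_add gmul_gadd_right gadd_assoc gadd_commute gadd_left_commute)

lemma gval_tmul [simp]: "gval k (tmul u v) = gmul (gval k u) (gval k v)"
proof (induction u v arbitrary: k rule: tmul.induct)
  case (5 l r l' r')
  define L R L' R' where "L = gval (Suc k) l" and "R = gval (Suc k) r"
    and "L' = gval (Suc k) l'" and "R' = gval (Suc k) r'"
  define g where "g = gen k"
  have "gmul L (gmul g R') = gmul g (gmul (gparity L) R')"
    by (simp add: g_def gmul_assoc[symmetric] gmul_gen_commute)
  moreover have "gmul (gmul g R) (gmul g R') = gzero"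
    by (rule gmul_eq_gzero_if_common_generator[of _ k])
      (auto simp: g_def gmul_gen_apply split: if_splits)
  ultimately have "gmul (gadd L (gmul g R)) (gadd L' (gmul g R')) =
      gadd (gmul L L') (gmul g (gadd (gmul (gparity L) R') (gmul R L')))"
    by (simp add: gmul_gadd_left gmul_gadd_right gadd_assoc gadd_commute gadd_left_commute gmul_assoc)
  then show ?case
    using "5.IH" by (simp add: L_def R_def L'_def R'_def g_def)
qed (simp_all add: gsmul_gadd mult.commute)

lemma gval_tsum: "gval k (tsum ts) = (\<lambda>S. \<Sum>t\<leftarrow>ts. gval k t S)"
  by (induction ts) (simp_all add: tsum_def gzero_def gadd_def)

lemma gval_tprune [simp]: "gval k (tprune t) = gval k t"
proof (induction t arbitrary: k)
  case (Node l r)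
  then show ?case
    by (cases "(tprune l, tprune r)" rule: tnode.cases) auto
qed (simp_all add: fun_eq_iff gsmul_def gzero_def)

lemma gval_tgen [simp]: "gval k (tgen i) = gen (k + i)"
  by (induction i arbitrary: k) simp_all

lemma gval_tcontaining:
  assumes "k \<le> i"
  shows "gval k (tcontaining i k t) = gcontaining i (gval k t)"
  using assms
proof (induction t arbitrary: k)
  case (Node l r)
  show ?case
  proof (cases "k = i")
    case True
    have "gcontaining i (gval (Suc k) l) = gzero"
      using gval_support[of "Suc k" l] True by (fastforce simp: gcontaining_def gzero_def)
    with True show ?thesis
      by (simp add: gcontaining_gmul_gen)
  next
    case False
    with Node show ?thesis
      by (simp add: gcontaining_gmul_gen)
  qed
qed (auto simp: gcontaining_def gzero_def gsmul_def gone_def)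

lemma gval_ttop: "gval k (ttop c n) = gsmul (of_int c) (gmono {k..<k + n})"
proof (induction n arbitrary: k)
  case 0
  then show ?case
    by (simp add: gone_eq_gmono)
next
  case (Suc n)
  have "inversions {k} {Suc k..<Suc k + n} = {}"
    by (auto simp: inversions_def)
  moreover have "{k} \<union> {Suc k..<Suc k + n} = {k..<k + Suc n}"
    by auto
  ultimately have "gmul (gen k) (gmono {Suc k..<Suc k + n}) = gmono {k..<k + Suc n}"
    by (simp add: gen_eq_gmono gmul_gmono_gmono gsign_eq)
  with Suc show ?case
    by simp
qed

lemma tmeets_card:
  assumes "tmeets I n k t" "gval k t S \<noteq> 0"
  shows "card (S \<inter> I) = n"
  using assms
proof (induction t arbitrary: n k S)
  case (Node l r)
  show ?case
  proof (cases "gval (Suc k) l S = 0")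
    case True
    with Node.prems have S: "k \<in> S" "finite S" "gval (Suc k) r (S - {k}) \<noteq> 0"
      by (auto simp: gadd_def gmul_gen_apply split: if_splits)
    then have "r \<noteq> Zero"
      by (auto simp: gzero_def)
    show ?thesis
    proof (cases "k \<in> I")
      case True
      with Node.prems \<open>r \<noteq> Zero\<close> obtain m where "n = Suc m" "tmeets I m (Suc k) r"
        by (cases n) auto
      with Node.IH(2) S have "card ((S - {k}) \<inter> I) = m"
        by blast
      moreover have "S \<inter> I = insert k ((S - {k}) \<inter> I)"
        using S True by auto
      ultimately show ?thesis
        using S \<open>n = Suc m\<close> by simp
    next
      case False
      with Node.prems Node.IH(2) S have "card ((S - {k}) \<inter> I) = n"
        by auto
      moreover have "S \<inter> I = (S - {k}) \<inter> I"
        using False by auto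
      ultimately show ?thesis
        by simp
    qed
  next
    case False
    with Node show ?thesis
      by auto
  qed
qed (auto simp: gzero_def gsmul_def gone_def split: if_splits)

section \<open>The invariant \<open>\<X>\<^sup>2\<close>\<close>

lemma gtop_eq_gmono: "gtop = gmono {..<24}"
proof -
  have "foldl gmul gone (map gen [0..<n]) = gmono {..<n}" for n
  proof (induction n)
    case (Suc n)
    have "inversions {..<n} {n} = {}"
      by (auto simp: inversions_def)
    then have "gmul (gmono {..<n}) (gen n) = gmono {..<Suc n}"
      by (simp add: gen_eq_gmono gmul_gmono_gmono gsign_eq lessThan_Suc insert_commute)
    with Suc show ?case
      by simp
  qed (simp add: gone_eq_gmono)
  then show ?thesis
    by (simp add: gtop_def)
qed

definition jtree :: "nat \<Rightarrow> nat \<Rightarrow> gtree" where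
  "jtree a b = tsum [tmul (tgen (12 + 3 * a + A)) (tgen (3 * b + A)). A \<leftarrow> [0, 1, 2]]"

lemma Jc_eq_gval: "Jc a b = gval 0 (jtree a b)"
proof -
  have "{..<3::nat} = {0, 1, 2}"
    by auto
  then show ?thesis
    by (simp add: Jc_def jtree_def psi_def psibar_def gsum_def gval_tsum)
qed

lemma geven_Jc: "geven (Jc a b)"
  unfolding Jc_def psi_def psibar_def by (intro geven_gsum geven_gmul_gen_gen)

definition beta2_support :: "(nat \<times> nat) list" where
  "beta2_support = [(0, 2), (1, 3), (2, 0), (3, 1)]"

definition beta4_support :: "(nat \<times> nat \<times> nat \<times> nat) list" where
  "beta4_support = [(0, 2, 0, 2), (0, 2, 2, 0), (0, 3, 1, 2), (0, 3, 2, 1),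
    (1, 2, 0, 3), (1, 2, 3, 0), (1, 3, 1, 3), (1, 3, 3, 1),
    (2, 0, 0, 2), (2, 0, 2, 0), (2, 1, 0, 3), (2, 1, 3, 0),
    (3, 0, 1, 2), (3, 0, 2, 1), (3, 1, 1, 3), (3, 1, 3, 1)]"

lemma beta2_eq: "beta2 a d = (if (a, d) \<in> set beta2_support then 1 else 0)"
  by (auto simp: beta2_def beta2_support_def)

lemma less_4_cases: "(n::nat) < 4 \<longleftrightarrow> n = 0 \<or> n = 1 \<or> n = 2 \<or> n = 3"
  by presburger

lemma sum_lessThan_4: "(\<Sum>i<4::nat. f i) = f 0 + f 1 + f 2 + (f 3 :: complex)"
  by (simp add: eval_nat_numeral add.commute add.left_commute)

lemma beta4_eq:
  assumes "b < 4" "c < 4" "e < 4" "f < 4"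
  shows "beta4 b c e f = (if (b, c, e, f) \<in> set beta4_support then -1 else 0)"
  using assms unfolding less_4_cases
  by (elim disjE) (simp_all add: beta4_def gamma_low_def sum_lessThan_4 gamma_up_def epsilon_def
      eps2_def sigma_def sigmat_def eta_def beta4_support_def)

definition x2_indices :: "(nat \<times> nat \<times> nat \<times> nat \<times> nat \<times> nat) list" where
  "x2_indices = [(a, b, c, d, e, f). (a, d) \<leftarrow> beta2_support, (b, c, e, f) \<leftarrow> beta4_support]"

lemma mem_x2_indices:
  "(a, b, c, d, e, f) \<in> set x2_indices \<longleftrightarrow>
    (a, d) \<in> set beta2_support \<and> (b, c, e, f) \<in> set beta4_support"
  unfolding x2_indices_def by force

definition x2_term_tree :: "nat \<times> nat \<times> nat \<times> nat \<times> nat \<times> nat \<Rightarrow> gtree" where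
  "x2_term_tree = (\<lambda>(a, b, c, d, e, f).
    tadd (tmul (tmul (jtree a d) (jtree b e)) (jtree c f))
      (tscale 2 (tmul (tmul (jtree a e) (jtree b f)) (jtree c d))))"

definition x2tree :: gtree where
  "x2tree = tscale (-4) (tsum (map x2_term_tree x2_indices))"

lemma X2_eq_gval: "X2 = gval 0 x2tree"
proof
  fix S
  define F where "F = (\<lambda>(a, b, c, d, e, f).
    gsmul (beta4 b c e f * beta2 a d)
      (gadd (gmul (gmul (Jc a d) (Jc b e)) (Jc c f))
        (gsmul 2 (gmul (gmul (Jc a e) (Jc b f)) (Jc c d)))))"
  define box where
    "box = {..<4::nat} \<times> {..<4::nat} \<times> {..<4::nat} \<times> {..<4::nat} \<times> {..<4::nat} \<times> {..<4::nat}"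
  have X2_F: "X2 = gsmul 4 (gsum F box)"
    unfolding X2_def F_def box_def ..
  have F_eq: "F p = (if p \<in> set x2_indices then gsmul (-1) (gval 0 (x2_term_tree p)) else gzero)"
    if "p \<in> box" for p
    using that
    by (auto simp: F_def box_def beta2_eq beta4_eq mem_x2_indices x2_term_tree_def Jc_eq_gval)
  have "set x2_indices \<subseteq> box"
    by (auto simp: x2_indices_def beta2_support_def beta4_support_def box_def)
  then have "(\<Sum>p\<in>box. F p S) = (\<Sum>p\<in>set x2_indices. - gval 0 (x2_term_tree p) S)"
    by (subst sum.mono_neutral_cong_right[of box "set x2_indices"])
      (auto simp: F_eq box_def gsmul_def gzero_def)
  also have "\<dots> = - (\<Sum>p\<leftarrow>x2_indices. gval 0 (x2_term_tree p) S)"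
    by (simp add: sum_list_distinct_conv_sum_set x2_indices_def beta2_support_def
        beta4_support_def sum_negf)
  finally show "X2 S = gval 0 x2tree S"
    by (simp add: X2_F gsum_def gsmul_def x2tree_def gval_tsum o_def)
qed

lemma geven_X2: "geven X2"
  unfolding X2_def
  by (intro geven_gsmul geven_gsum) (auto intro!: geven_gsmul geven_gadd geven_gmul geven_Jc)

text \<open>The \<open>let\<close> makes the simplifier evaluate the tree of \<open>\<X>\<^sup>2\<close> only once.\<close>
lemma x2tree_certificate:
  "let t = tprune x2tree in
    tmeets {0, 3, 6, 9} 1 0 t \<and>
    tprune (tmul (tcontaining 0 0 t) (tmul (tcontaining 3 0 t)
      (tmul (tcontaining 6 0 t) (tcontaining 9 0 t)))) = ttop 679477248 24"
  by code_simp

lemma X2_monomials_meet_colour_one: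
  assumes "X2 S \<noteq> 0"
  shows "card (S \<inter> {0, 3, 6, 9}) = 1"
proof -
  have "tmeets {0, 3, 6, 9} 1 0 (tprune x2tree)"
    using x2tree_certificate unfolding Let_def by blast
  with assms show ?thesis
    by (simp add: tmeets_card X2_eq_gval)
qed

lemma X2_colour_one_parts_product:
  "gmul (gcontaining 0 X2) (gmul (gcontaining 3 X2) (gmul (gcontaining 6 X2) (gcontaining 9 X2))) =
    gsmul 679477248 gtop"
proof -
  let ?t = "tprune x2tree"
  have "tprune (tmul (tcontaining 0 0 ?t) (tmul (tcontaining 3 0 ?t)
      (tmul (tcontaining 6 0 ?t) (tcontaining 9 0 ?t)))) = ttop 679477248 24"
    using x2tree_certificate unfolding Let_def by blast
  then have "gval 0 (tmul (tcontaining 0 0 ?t) (tmul (tcontaining 3 0 ?t)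
      (tmul (tcontaining 6 0 ?t) (tcontaining 9 0 ?t)))) = gval 0 (ttop 679477248 24)"
    by (metis gval_tprune)
  then show ?thesis
    by (simp add: gval_tcontaining gval_ttop gtop_eq_gmono atLeast0LessThan X2_eq_gval)
qed

theorem lemma1:
  shows "\<exists>c. c \<noteq> 0 \<and> gpow X2 4 = gsmul c gtop"
proof -
  define I :: "nat set" where "I = {0, 3, 6, 9}" \<comment> \<open>the indices of the \<open>\<psi>\<^sup>a\<^sub>1\<close>\<close>
  have "gpow X2 (card I) = gsmul (fact (card I)) (grass_of (\<Prod>i\<in>I. even_of (gcontaining i X2)))"
    by (rule gpow_card_eq_fact_prod_gcontaining)
      (simp_all add: I_def geven_X2 X2_monomials_meet_colour_one)
  also have "grass_of (\<Prod>i\<in>I. even_of (gcontaining i X2)) = gsmul 679477248 gtop"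
    by (simp add: I_def grass_of_even_of geven_gcontaining geven_X2 X2_colour_one_parts_product)
  also have "card I = 4"
    by (simp add: I_def)
  finally show ?thesis
    by (intro exI[of _ "fact 4 * 679477248"]) simp
qed

end
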